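(* For all $k\geq 0,l\geq 1$ and $k+l$ even, one has \[\langle T_{k,l}\rangle_q = \begin{cases} D^{l-1}G_{k-l+2} & \text{if } k-l\geq 0, \\ D^k G_{l-k} & \text{if } k-l\leq 2.\end{cases}\]
   Context: $\mathscr{P}$ is the set of partitions, $r_m(\lambda)$ the number of parts of $\lambda$ equal to $m$, and $\langle f\rangle_q=\sum_\lambda f(\lambda)q^{|\lambda|}/\sum_\lambda q^{|\lambda|}$. The Faulhaber polynomial $F_l$ is the polynomial with zero constant term with $F_l(n)=\sum_{i=1}^n i^{l-1}$ for $n\ge1$. $T_{k,l}(\lambda)=-\frac{B_{k+l}}{2(k+l)}(\delta_{l,1}+\delta_{k,0})+\sum_{m\ge1}m^kF_l(r_m(\lambda))$; equivalently, with $c_i(\lambda)=\#\{j\le i\mid\lambda_j=\lambda_i\}$, $T_{k,l}(\lambda)=-\frac{B_{k+l}}{2(k+l)}(\delta_{l,1}+\delta_{k,0})+\sum_i\lambda_i^kc_i(\lambda)^{l-1}$. $G_k=-\frac{B_k}{2k}+\sum_{r,m\ge1}m^{k-1}q^{mr}$ are the Eisenstein series and $D=q\frac{d}{dq}$. *)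

theory Defs
  imports "HOL-Library.Multiset" "HOL-Computational_Algebra.Formal_Power_Series"
begin

text \<open>Bernoulli numbers, via the standard recursion
  sum_{j=0}^{n} binom(n+1,j) B_j = 0 for n >= 1, B_0 = 1
  (so B_1 = -1/2; only even indices are used below).\<close>
fun bernoulli :: "nat \<Rightarrow> real" where
  "bernoulli n = (if n = 0 then 1
     else - (\<Sum>j<n. real ((n + 1) choose j) * bernoulli j) / real (n + 1))"

text \<open>Partitions are finite multisets of positive integers (their parts);
  r_m(lambda) = count lambda m, |lambda| = sum of the parts.\<close>
definition partitions :: "nat \<Rightarrow> nat multiset set" where
  "partitions n = {p. (\<forall>m\<in>#p. 0 < m) \<and> sum_mset p = n}"

definition part_gen :: "(nat multiset \<Rightarrow> real) \<Rightarrow> real fps" where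
  "part_gen f = Abs_fps (\<lambda>n. \<Sum>p\<in>partitions n. f p)"

definition qbracket :: "(nat multiset \<Rightarrow> real) \<Rightarrow> real fps" where
  "qbracket f = part_gen f / part_gen (\<lambda>_. 1)"

text \<open>Faulhaber polynomial F_l evaluated at a nonnegative integer n:
  F_l(n) = sum_{i=1}^n i^(l-1) (and F_l(0) = 0 since F_l has zero constant term).\<close>
definition faulhaber :: "nat \<Rightarrow> nat \<Rightarrow> real" where
  "faulhaber l n = (\<Sum>i=1..n. real i ^ (l - 1))"

definition kronecker :: "nat \<Rightarrow> nat \<Rightarrow> real" where
  "kronecker a b = (if a = b then 1 else 0)"

text \<open>T_{k,l}(lambda). The sum over m >= 1 is restricted to parts of lambda,
  since F_l(r_m(lambda)) = F_l(0) = 0 otherwise.\<close>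
definition T :: "nat \<Rightarrow> nat \<Rightarrow> nat multiset \<Rightarrow> real" where
  "T k l p = - bernoulli (k + l) / (2 * real (k + l)) * (kronecker l 1 + kronecker k 0)
     + (\<Sum>m\<in>set_mset p. real m ^ k * faulhaber l (count p m))"

text \<open>Eisenstein series G_k = -B_k/(2k) + sum_{r,m>=1} m^(k-1) q^(mr).\<close>
definition eisenstein :: "nat \<Rightarrow> real fps" where
  "eisenstein k = Abs_fps (\<lambda>n. if n = 0 then - bernoulli k / (2 * real k)
     else (\<Sum>d | d dvd n. real d ^ (k - 1)))"

definition qD :: "real fps \<Rightarrow> real fps" where
  "qD f = fps_X * fps_deriv f"

end

theory Submission
  imports Defs
begin

text \<open>
  Since F_l(r) = sum_{i=1}^r i^(l-1), the non-constant part of T_{k,l}(lambda) is the sum of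
  m^k r^(l-1) over the pairs (m, r) with 1 <= r <= r_m(lambda). Removing r copies of the part m
  is a bijection from the partitions of n with r_m >= r onto the partitions of n - m r, so the
  generating series of this part is the partition generating function times the divisor
  series sum_{m,r >= 1} m^k r^(l-1) q^(m r); dividing, the q-bracket of T_{k,l} is that divisor
  series plus the constant term. As D multiplies the coefficient of q^(m r) by m r, the divisor
  series of D^(l-1) G_(k-l+2) and of D^k G_(l-k) carry the same weights (in the second case
  after exchanging m and r), and the constant terms agree because D kills constants.
\<close>

lemma size_le_sum_mset_pos: "(\<forall>m\<in>#p. 0 < m) \<Longrightarrow> size p \<le> sum_mset (p :: nat multiset)"
  by (induction p) auto

lemma mult_count_le_sum_mset: "m * count p m \<le> sum_mset (p :: nat multiset)"
  by (induction p) auto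

lemma finite_partitions: "finite (partitions n)"
proof -
  have "partitions n \<subseteq> mset ` {xs. set xs \<subseteq> {0..n} \<and> length xs \<le> n}"
  proof
    fix p assume p: "p \<in> partitions n"
    have "m \<le> n" if "m \<in># p" for m
    proof -
      have "m \<le> m * count p m" using that by simp
      also have "\<dots> \<le> n" using p mult_count_le_sum_mset[of m p] by (simp add: partitions_def)
      finally show ?thesis .
    qed
    moreover have "size p \<le> n"
      using p size_le_sum_mset_pos unfolding partitions_def by auto
    ultimately show "p \<in> mset ` {xs. set xs \<subseteq> {0..n} \<and> length xs \<le> n}"
      by (intro image_eqI[of _ _ "sorted_list_of_multiset p"])
         (auto simp flip: size_mset)
  qed
  moreover have "finite {xs. set xs \<subseteq> {0..n} \<and> length xs \<le> n}"
    by (rule finite_lists_length_le) auto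
  ultimately show ?thesis
    using finite_surj by blast
qed

lemma partitions_0: "partitions 0 = {{#}}"
  unfolding partitions_def by (auto, metis less_irrefl multiset_nonemptyE)

lemma card_partitions_count_ge:
  assumes "0 < m" and "m * r \<le> n"
  shows "card {p \<in> partitions n. r \<le> count p m} = card (partitions (n - m * r))"
proof -
  have "bij_betw (\<lambda>p. p + replicate_mset r m) (partitions (n - m * r))
      {p \<in> partitions n. r \<le> count p m}"
  proof (rule bij_betw_byWitness[where f' = "\<lambda>p. p - replicate_mset r m"])
    show "\<forall>p\<in>{p \<in> partitions n. r \<le> count p m}. p - replicate_mset r m + replicate_mset r m = p"
      by (auto simp: count_le_replicate_mset_subset_eq subset_mset.diff_add)
    show "(\<lambda>p. p + replicate_mset r m) ` partitions (n - m * r) \<subseteq> {p \<in> partitions n. r \<le> count p m}"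
      using assms by (auto simp: partitions_def split: if_splits)
    show "(\<lambda>p. p - replicate_mset r m) ` {p \<in> partitions n. r \<le> count p m} \<subseteq> partitions (n - m * r)"
      using assms
      by (auto simp: partitions_def count_le_replicate_mset_subset_eq sum_mset_diff mult.commute
          dest: in_diffD)
  qed simp
  then show ?thesis
    by (rule bij_betw_same_card[symmetric])
qed

definition divisor_series :: "(nat \<Rightarrow> nat \<Rightarrow> real) \<Rightarrow> real fps" where
  "divisor_series g = Abs_fps (\<lambda>n. if n = 0 then 0 else \<Sum>d | d dvd n. g d (n div d))"

lemma sum_divisors_eq_sum_factorizations:
  fixes g :: "nat \<Rightarrow> nat \<Rightarrow> 'a :: comm_monoid_add"
  shows "(\<Sum>j=1..n. \<Sum>d | d dvd j. g j d)
    = (\<Sum>(m, r)\<in>{(m, r). 0 < m \<and> 0 < r \<and> m * r \<le> n}. g (m * r) m)"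
proof -
  have "(\<Sum>j=1..n. \<Sum>d | d dvd j. g j d) = (\<Sum>(j, d)\<in>Sigma {1..n} (\<lambda>j. {d. d dvd j}). g j d)"
    by (rule sum.Sigma) auto
  also have "\<dots> = (\<Sum>(m, r)\<in>{(m, r). 0 < m \<and> 0 < r \<and> m * r \<le> n}. g (m * r) m)"
    by (rule sum.reindex_bij_witness[where i = "\<lambda>(m, r). (m * r, m)" and j = "\<lambda>(j, d). (d, j div d)"])
       (auto elim!: dvdE)
  finally show ?thesis .
qed

lemma sum_partitions_count_sum:
  fixes g :: "nat \<Rightarrow> nat \<Rightarrow> real"
  shows "(\<Sum>p\<in>partitions n. \<Sum>m\<in>set_mset p. \<Sum>r=1..count p m. g m r)
    = (\<Sum>j=1..n. real (card (partitions (n - j))) * (\<Sum>d | d dvd j. g d (j div d)))"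
proof -
  define S where "S = {(m, r). 0 < m \<and> 0 < r \<and> m * r \<le> n}"
  have "S \<subseteq> {..n} \<times> {..n}"
    unfolding S_def
    by auto (metis dvd_imp_le dvd_triv_left dvd_triv_right le_trans mult_pos_pos)+
  then have "finite S"
    by (rule finite_subset) auto
  have "(\<Sum>m\<in>set_mset p. \<Sum>r=1..count p m. g m r) = (\<Sum>(m, r)\<in>{(m, r)\<in>S. r \<le> count p m}. g m r)"
    if "p \<in> partitions n" for p
  proof -
    have "Sigma (set_mset p) (\<lambda>m. {1..count p m}) = {(m, r)\<in>S. r \<le> count p m}"
      using that mult_count_le_sum_mset[of _ p]
      by (auto simp: S_def partitions_def intro: order.trans[OF mult_le_mono2]
          simp flip: count_greater_zero_iff)
    then show ?thesis
      by (simp add: sum.Sigma)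
  qed
  then have "(\<Sum>p\<in>partitions n. \<Sum>m\<in>set_mset p. \<Sum>r=1..count p m. g m r)
      = (\<Sum>p\<in>partitions n. \<Sum>x\<in>{x\<in>S. snd x \<le> count p (fst x)}. g (fst x) (snd x))"
    by (auto intro!: sum.cong simp: case_prod_beta)
  also have "\<dots> = (\<Sum>x\<in>S. \<Sum>p\<in>{p\<in>partitions n. snd x \<le> count p (fst x)}. g (fst x) (snd x))"
    using finite_partitions \<open>finite S\<close> by (rule sum.swap_restrict)
  also have "\<dots> = (\<Sum>(m, r)\<in>S. real (card (partitions (n - m * r))) * g m r)"
    by (intro sum.cong refl) (auto simp: S_def card_partitions_count_ge)
  also have "\<dots> = (\<Sum>j=1..n. real (card (partitions (n - j))) * (\<Sum>d | d dvd j. g d (j div d)))"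
    unfolding S_def sum_distrib_left sum_divisors_eq_sum_factorizations by (auto intro!: sum.cong)
  finally show ?thesis .
qed

lemma part_gen_count_sum:
  "part_gen (\<lambda>p. \<Sum>m\<in>set_mset p. \<Sum>r=1..count p m. g m r) = part_gen (\<lambda>_. 1) * divisor_series g"
proof (rule fps_ext)
  fix n
  have "fps_nth (part_gen (\<lambda>p. \<Sum>m\<in>set_mset p. \<Sum>r=1..count p m. g m r)) n
      = (\<Sum>j=1..n. real (card (partitions (n - j))) * (\<Sum>d | d dvd j. g d (j div d)))"
    unfolding part_gen_def fps_nth_Abs_fps by (rule sum_partitions_count_sum)
  also have "\<dots> = (\<Sum>j=0..n. fps_nth (divisor_series g) j * real (card (partitions (n - j))))"
    by (simp add: sum.atLeast_Suc_atMost divisor_series_def mult.commute)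
  also have "\<dots> = fps_nth (part_gen (\<lambda>_. 1) * divisor_series g) n"
    by (subst mult.commute) (simp add: fps_mult_nth part_gen_def)
  finally show "fps_nth (part_gen (\<lambda>p. \<Sum>m\<in>set_mset p. \<Sum>r=1..count p m. g m r)) n
      = fps_nth (part_gen (\<lambda>_. 1) * divisor_series g) n" .
qed

lemma qbracket_const_plus:
  assumes "part_gen h = part_gen (\<lambda>_. 1) * F"
  shows "qbracket (\<lambda>p. c + h p) = fps_const c + F"
proof -
  have "fps_nth (part_gen (\<lambda>_. 1)) 0 = 1"
    by (simp add: part_gen_def partitions_0)
  then have "part_gen (\<lambda>_. 1) \<noteq> 0"
    by auto
  have "part_gen (\<lambda>p. c + h p) = fps_const c * part_gen (\<lambda>_. 1) + part_gen h"
    by (simp add: fps_eq_iff part_gen_def sum.distrib)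
  then have "part_gen (\<lambda>p. c + h p) = part_gen (\<lambda>_. 1) * (fps_const c + F)"
    by (simp add: assms algebra_simps)
  with \<open>part_gen (\<lambda>_. 1) \<noteq> 0\<close> show ?thesis
    by (simp add: qbracket_def)
qed

lemma qbracket_T:
  "qbracket (T k l) = fps_const (- bernoulli (k + l) / (2 * real (k + l)) * (kronecker l 1 + kronecker k 0))
    + divisor_series (\<lambda>m r. real m ^ k * real r ^ (l - 1))"
proof -
  have "T k l = (\<lambda>p. - bernoulli (k + l) / (2 * real (k + l)) * (kronecker l 1 + kronecker k 0)
      + (\<Sum>m\<in>set_mset p. \<Sum>r=1..count p m. real m ^ k * real r ^ (l - 1)))"
    by (simp add: fun_eq_iff T_def faulhaber_def sum_distrib_left del: bernoulli.simps)
  then show ?thesis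
    by (simp only: qbracket_const_plus part_gen_count_sum)
qed

lemma qD_pow_nth: "fps_nth ((qD ^^ j) f) n = real n ^ j * fps_nth f n"
  by (induction j) (auto simp: qD_def)

lemma qD_pow_const_plus_divisor_series:
  "(qD ^^ j) (fps_const c + divisor_series g)
    = fps_const (if j = 0 then c else 0) + divisor_series (\<lambda>d e. real (d * e) ^ j * g d e)"
  by (auto simp: fps_eq_iff qD_pow_nth divisor_series_def sum_distrib_left intro!: sum.cong elim!: dvdE)

lemma divisor_series_cong:
  assumes "\<And>d e. 0 < d \<Longrightarrow> 0 < e \<Longrightarrow> g d e = h d e"
  shows "divisor_series g = divisor_series h"
  using assms by (auto simp: fps_eq_iff divisor_series_def intro!: sum.cong elim!: dvdE)

lemma divisor_series_swap: "divisor_series g = divisor_series (\<lambda>d e. g e d)"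
proof -
  have "(\<Sum>d | d dvd n. g d (n div d)) = (\<Sum>d | d dvd n. g (n div d) d)" if "0 < n" for n
    by (rule sum.reindex_bij_witness[where i = "\<lambda>d. n div d" and j = "\<lambda>d. n div d"])
       (use that in \<open>auto elim!: dvdE\<close>)
  then show ?thesis
    by (simp add: fps_eq_iff divisor_series_def)
qed

lemma eisenstein_eq_divisor_series:
  "eisenstein k = fps_const (- bernoulli k / (2 * real k)) + divisor_series (\<lambda>d _. real d ^ (k - 1))"
  by (simp add: fps_eq_iff eisenstein_def divisor_series_def)

lemma qbracket_T_eq_qD_pow_eisenstein_of_le:
  assumes "1 \<le> l" and "l \<le> k"
  shows "qbracket (T k l) = (qD ^^ (l - 1)) (eisenstein (k - l + 2))"
proof -
  have "(qD ^^ (l - 1)) (eisenstein (k - l + 2))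
      = fps_const (if l = 1 then - bernoulli (k + 1) / (2 * real (k + 1)) else 0)
        + divisor_series (\<lambda>d e. real (d * e) ^ (l - 1) * real d ^ (k - l + 1))"
    using assms
    by (simp add: eisenstein_eq_divisor_series qD_pow_const_plus_divisor_series del: bernoulli.simps)
  also have "\<dots> = qbracket (T k l)"
  proof -
    have "l - 1 + (k - l + 1) = k"
      using assms by arith
    then have "real d ^ (l - 1) * real d ^ (k - l + 1) = real d ^ k" for d
      by (metis power_add)
    then show ?thesis
      using assms unfolding qbracket_T
      by (auto simp: kronecker_def power_mult_distrib mult_ac add.commute intro!: divisor_series_cong
          simp del: bernoulli.simps)
  qed
  finally show ?thesis ..
qed

lemma qbracket_T_eq_qD_pow_eisenstein_of_ge:
  assumes "k + 2 \<le> l"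
  shows "qbracket (T k l) = (qD ^^ k) (eisenstein (l - k))"
proof -
  have "(qD ^^ k) (eisenstein (l - k))
      = fps_const (if k = 0 then - bernoulli l / (2 * real l) else 0)
        + divisor_series (\<lambda>d e. real (d * e) ^ k * real d ^ (l - k - 1))"
    by (simp add: eisenstein_eq_divisor_series qD_pow_const_plus_divisor_series del: bernoulli.simps)
  also have "\<dots> = qbracket (T k l)"
  proof -
    have "real d ^ k * real d ^ (l - k - 1) = real d ^ (l - 1)" for d
      using assms by (simp flip: power_add)
    then show ?thesis
      using assms unfolding qbracket_T divisor_series_swap[of "\<lambda>m r. real m ^ k * real r ^ (l - 1)"]
      by (auto simp: kronecker_def power_mult_distrib mult_ac intro!: divisor_series_cong
          simp del: bernoulli.simps)
  qed
  finally show ?thesis ..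
qed

theorem proposition3p1p2:
  fixes k l :: nat
  assumes "l \<ge> 1" and "even (k + l)"
  shows "(l \<le> k \<longrightarrow> qbracket (T k l) = (qD ^^ (l - 1)) (eisenstein (k - l + 2)))
       \<and> (k + 2 \<le> l \<longrightarrow> qbracket (T k l) = (qD ^^ k) (eisenstein (l - k)))"
  using \<open>l \<ge> 1\<close> qbracket_T_eq_qD_pow_eisenstein_of_le qbracket_T_eq_qD_pow_eisenstein_of_ge
  by blast

end
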